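(* Let $b>0$, let $m\colon[0,+\infty)\to[0,+\infty)$ be an increasing function such that $m(t)\le Ct$ for all $t\ge0$ (for some constant $C$) and $m(t)=0$ for $t\in[0,b)$, and let $Q\colon[0,+\infty)\to[0,+\infty)$ be continuous with $Q(t)=O(t)$ as $t\to+\infty$. Then for every $N\ge0$ there exists $C_2\ge0$ such that for all $b\le r<R<+\infty$ $$\int_r^R\frac{Q(t)}{t^2}\,dm(t)\le C_2\int_r^R t^N\sup_{s\ge t}\frac{Q(s)}{s^{2+N}}\,dt+C_2.$$
   Context: The Stieltjes integral $\int_r^R\dots dm$ is taken over the interval $(r,R]$. *)

theory Defs
  imports "HOL-Analysis.Analysis" "HOL-Library.Landau_Symbols"
begin

text \<open>Right-continuous regularisation of an increasing function m defined on [0,+inf).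
  For t < 0 the set contains 0, so (as m 0 = 0 and m is nonnegative) the value is 0.\<close>
definition right_reg :: "(real \<Rightarrow> real) \<Rightarrow> real \<Rightarrow> real" where
  "right_reg m t = Inf (m ` ({t<..} \<inter> {0..}))"

definition stieltjes_int :: "(real \<Rightarrow> real) \<Rightarrow> (real \<Rightarrow> real) \<Rightarrow> real \<Rightarrow> real \<Rightarrow> real" where
  "stieltjes_int m f r R =
     integral\<^sup>L (interval_measure (right_reg m)) (\<lambda>t. indicator {r<..R} t * f t)"

end

theory Submission
  imports Defs
begin

(* Let F be the right-continuous regularisation of m, so that the Stieltjes integral is an integral
   against the Lebesgue-Stieltjes measure of F, and let g t = sup {Q s / s^(2+N) | s >= t}, a
   decreasing function with Q t / t^2 <= t^N g t. Since s^N g s >= (t/2)^N g t on [t/2, t], the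
   value t^N g t is at most 2^(N+1) / t times the integral of s^N g s over [t/2, t]. Integrating
   this against dF(t) and exchanging the order of integration (Tonelli), the inner integral over
   t in [s, 2s] is at most 2^(N+1) (F(2s) - F(s/2)) / s <= 2^(N+1) 4C by the linear growth of m.
   This leaves the integral of s^N g s over [r/2, R]; its part over [r/2, r] is bounded
   independently of r because Q s = O(s), so g s = O(s^-(1+N)). *)

lemma right_reg_le:
  assumes "\<And>t. 0 \<le> t \<Longrightarrow> 0 \<le> m t" and "x < u" "0 \<le> u"
  shows "right_reg m x \<le> m u"
  unfolding right_reg_def using assms by (intro cInf_lower) (auto simp: bdd_below_def)

lemma right_reg_nonneg:
  assumes m_nonneg: "\<And>t. 0 \<le> t \<Longrightarrow> 0 \<le> m t"
  shows "0 \<le> right_reg m x"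
proof -
  have "max (x + 1) 0 \<in> {x<..} \<inter> {0..}" by auto
  then show ?thesis
    unfolding right_reg_def using m_nonneg by (intro cInf_greatest) auto
qed

lemma mono_right_reg:
  assumes m_nonneg: "\<And>t. 0 \<le> t \<Longrightarrow> 0 \<le> m t"
  shows "mono (right_reg m)"
proof
  fix x y :: real assume "x \<le> y"
  moreover have "max (y + 1) 0 \<in> {y<..} \<inter> {0..}" by auto
  ultimately show "right_reg m x \<le> right_reg m y"
    unfolding right_reg_def using m_nonneg
    by (intro cInf_superset_mono) (auto simp: bdd_below_def)
qed

lemma continuous_at_right_right_reg:
  assumes m_nonneg: "\<And>t. 0 \<le> t \<Longrightarrow> 0 \<le> m t"
  shows "continuous (at_right a) (right_reg m)"
  unfolding continuous_within
proof (rule tendstoI)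
  fix e :: real assume "0 < e"
  have "max (a + 1) 0 \<in> {a<..} \<inter> {0..}" by auto
  moreover have "Inf (m ` ({a<..} \<inter> {0..})) < right_reg m a + e"
    using \<open>0 < e\<close> by (simp add: right_reg_def)
  ultimately obtain u where u: "a < u" "0 \<le> u" "m u < right_reg m a + e"
    by (auto dest!: cInf_lessD[rotated])
  have "\<forall>\<^sub>F y in at_right a. y \<in> {a<..<u}"
    using u by (intro eventually_at_right_real)
  then show "\<forall>\<^sub>F y in at_right a. dist (right_reg m y) (right_reg m a) < e"
  proof (rule eventually_mono)
    fix y assume y: "y \<in> {a<..<u}"
    have "right_reg m a \<le> right_reg m y"
      using y by (intro monoD[OF mono_right_reg[OF m_nonneg]]) auto
    moreover have "right_reg m y \<le> m u"
      using y u by (intro right_reg_le[OF m_nonneg]) auto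
    ultimately show "dist (right_reg m y) (right_reg m a) < e"
      using u by (simp add: dist_real_def)
  qed
qed

lemma right_reg_dyadic_increment_le:
  assumes m_nonneg: "\<And>t. 0 \<le> t \<Longrightarrow> 0 \<le> m t" and m_le: "\<And>t. 0 \<le> t \<Longrightarrow> m t \<le> C * t"
    and "0 < s"
  shows "right_reg m (2 * s) - right_reg m (s/2) \<le> 4 * C * s"
  using right_reg_le[of m "2 * s" "4 * s"] right_reg_nonneg[of m "s/2"] m_nonneg m_le[of "4 * s"] \<open>0 < s\<close>
  by simp

lemma continuous_bigo_id_imp_linear_bound:
  fixes Q :: "real \<Rightarrow> real"
  assumes a: "0 < a" and Q_cont: "continuous_on {a..} Q" and Q_O: "Q \<in> O(\<lambda>t. t)"
  shows "\<exists>K\<ge>0. \<forall>s\<ge>a. Q s \<le> K * s"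
proof -
  obtain c where c: "0 < c" "\<forall>\<^sub>F x in at_top. norm (Q x) \<le> c * norm x"
    using Q_O by (elim landau_o.bigE) auto
  then obtain x0 where x0: "\<And>x. x0 \<le> x \<Longrightarrow> \<bar>Q x\<bar> \<le> c * \<bar>x\<bar>"
    by (auto simp: eventually_at_top_linorder)
  have "continuous_on {a..max x0 a} Q"
    by (rule continuous_on_subset[OF Q_cont]) auto
  then obtain M where M: "\<And>s. s \<in> {a..max x0 a} \<Longrightarrow> Q s \<le> M"
    using continuous_attains_sup[of "{a..max x0 a}" Q] by fastforce
  have "Q s \<le> (c + max M 0 / a) * s" if "a \<le> s" for s
  proof (cases "s \<le> max x0 a")
    case True
    have "Q s \<le> max M 0 / a * a" using M[of s] True that a by auto
    also have "\<dots> \<le> (c + max M 0 / a) * s"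
      using that a c by (intro mult_mono) auto
    finally show ?thesis .
  next
    case False
    then have "Q s \<le> c * s" using x0[of s] that a by (auto simp: abs_le_iff)
    also have "\<dots> \<le> (c + max M 0 / a) * s"
      using that a by (intro mult_right_mono) auto
    finally show ?thesis .
  qed
  moreover have "0 \<le> c + max M 0 / a"
    using a c by simp
  ultimately show ?thesis by blast
qed

lemma tail_sup_powr_quotient:
  fixes Q :: "real \<Rightarrow> real" and a K N :: real
  assumes a: "0 < a" and N: "0 \<le> N"
    and Q_nonneg: "\<And>s. a \<le> s \<Longrightarrow> 0 \<le> Q s" and Q_le: "\<And>s. a \<le> s \<Longrightarrow> Q s \<le> K * s"
  \<comment> \<open>The cut-off at a makes G antitone, hence Borel measurable, on the whole real line.\<close>
  defines "G \<equiv> \<lambda>t. SUP s\<in>{max t a..}. Q s / s powr (2 + N)"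
  shows "antimono G" and "\<And>t. 0 \<le> G t" and "\<And>t. a \<le> t \<Longrightarrow> t powr N * G t \<le> K / t"
    and "\<And>t. a \<le> t \<Longrightarrow> Q t / t\<^sup>2 \<le> t powr N * G t"
proof -
  have K: "0 \<le> K"
    using order_trans[OF Q_nonneg Q_le, of a] a by (simp add: zero_le_mult_iff)
  have quotient_le: "Q s / s powr (2 + N) \<le> K / t powr (1 + N)" if "a \<le> t" "t \<le> s" for s t
  proof -
    have s: "0 < s" using that a by simp
    have "Q s / s powr (2 + N) \<le> K * s / s powr (2 + N)"
      using Q_le[of s] that by (intro divide_right_mono) auto
    also have "\<dots> = K / s powr (1 + N)"
      using s by (simp add: powr_add power2_eq_square)
    also have "\<dots> \<le> K / t powr (1 + N)"
      using that a K N by (intro divide_left_mono powr_mono2 mult_pos_pos) auto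
    finally show ?thesis .
  qed
  have bdd: "bdd_above ((\<lambda>s. Q s / s powr (2 + N)) ` {max t a..})" for t
    using quotient_le[of "max t a"] unfolding bdd_above_def by fastforce
  have quotient_le_G: "Q s / s powr (2 + N) \<le> G t" if "max t a \<le> s" for s t
    unfolding G_def using bdd that by (intro cSUP_upper) auto
  show "antimono G"
  proof
    fix x y :: real assume "x \<le> y"
    then show "G y \<le> G x"
      unfolding G_def using bdd by (intro cSUP_subset_mono) auto
  qed
  show "0 \<le> G t" for t
    using order_trans[OF _ quotient_le_G[of t "max t a"]] Q_nonneg[of "max t a"] by simp
  show "t powr N * G t \<le> K / t" if "a \<le> t" for t
  proof -
    have "G t \<le> K / t powr (1 + N)"
      unfolding G_def using quotient_le that by (intro cSUP_least) auto
    then have "t powr N * G t \<le> t powr N * (K / t powr (1 + N))"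
      by (intro mult_left_mono) auto
    also have "\<dots> = K / t"
      using that a by (simp add: powr_add)
    finally show ?thesis .
  qed
  show "Q t / t\<^sup>2 \<le> t powr N * G t" if "a \<le> t" for t
  proof -
    have "Q t / t\<^sup>2 = t powr N * (Q t / t powr (2 + N))"
      using that a by (simp add: powr_add powr_numeral)
    also have "\<dots> \<le> t powr N * G t"
      using quotient_le_G[of t t] that by (intro mult_left_mono) auto
    finally show ?thesis .
  qed
qed

lemma borel_measurable_antimono:
  fixes f :: "real \<Rightarrow> real"
  assumes "antimono f"
  shows "f \<in> borel_measurable borel"
proof -
  have "mono (\<lambda>x. - f x)"
    using assms by (auto simp: antimono_def mono_def)
  then have "(\<lambda>x. - (- f x)) \<in> borel_measurable borel"
    by (intro borel_measurable_uminus borel_measurable_mono)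
  then show ?thesis by simp
qed

lemma interval_integral_nonneg:
  fixes f :: "real \<Rightarrow> real"
  assumes "a \<le> b" and "\<And>x. a \<le> x \<Longrightarrow> x \<le> b \<Longrightarrow> 0 \<le> f x"
  shows "0 \<le> (LBINT x=a..b. f x)"
  unfolding interval_integral_Icc[OF \<open>a \<le> b\<close>] set_lebesgue_integral_def
  using assms(2) by (intro integral_nonneg_AE) (auto simp: indicator_def)

lemma nn_integral_Icc_half_le:
  fixes \<psi> :: "real \<Rightarrow> real"
  assumes [measurable]: "\<psi> \<in> borel_measurable borel" and r: "0 < r" "r \<le> R"
    and \<psi>_nonneg: "\<And>s. r/2 \<le> s \<Longrightarrow> 0 \<le> \<psi> s" and \<psi>_le: "\<And>s. r/2 \<le> s \<Longrightarrow> \<psi> s \<le> K / s"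
  shows "(\<integral>\<^sup>+s. ennreal (\<psi> s) * indicator {r/2..R} s \<partial>lborel) \<le> ennreal (K + (LBINT s=r..R. \<psi> s))"
proof -
  have K: "0 \<le> K"
    using order_trans[OF \<psi>_nonneg \<psi>_le, of r] r by (simp add: zero_le_divide_iff)
  have I_nonneg: "0 \<le> (LBINT s=r..R. \<psi> s)"
    using r \<psi>_nonneg by (intro interval_integral_nonneg) auto
  have "integrable lborel (\<lambda>s. indicator {r..R} s *\<^sub>R \<psi> s)"
  proof (rule integrableI_bounded_set_indicator[where B="K/r"])
    have "\<psi> s \<le> K / r" if "r \<le> s" for s
      using \<psi>_le[of s] divide_left_mono[OF that K] that r by simp
    then show "AE s in lborel. s \<in> {r..R} \<longrightarrow> norm (\<psi> s) \<le> K / r"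
      using \<psi>_nonneg r by auto
  qed (use r in auto)
  then have I: "(\<integral>\<^sup>+s. ennreal (\<psi> s) * indicator {r..R} s \<partial>lborel) = ennreal (LBINT s=r..R. \<psi> s)"
    unfolding interval_integral_Icc[OF r(2)] set_lebesgue_integral_def
    using \<psi>_nonneg r
    by (subst nn_integral_eq_integral[symmetric])
       (auto intro!: nn_integral_cong AE_I2 simp: indicator_def)
  have "(\<integral>\<^sup>+s. ennreal (\<psi> s) * indicator {r/2..R} s \<partial>lborel)
      \<le> (\<integral>\<^sup>+s. ennreal (2 * K / r) * indicator {r/2..<r} s + ennreal (\<psi> s) * indicator {r..R} s \<partial>lborel)"
  proof (rule nn_integral_mono)
    fix s
    have "\<psi> s \<le> 2 * K / r" if "r/2 \<le> s"
    proof -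
      have "\<psi> s \<le> K / s"
        using \<psi>_le[OF that] .
      also have "\<dots> \<le> K / (r/2)"
        using that K r by (intro divide_left_mono) auto
      also have "\<dots> = 2 * K / r"
        by simp
      finally show ?thesis .
    qed
    then show "ennreal (\<psi> s) * indicator {r/2..R} s
        \<le> ennreal (2 * K / r) * indicator {r/2..<r} s + ennreal (\<psi> s) * indicator {r..R} s"
      by (auto simp: indicator_def intro: ennreal_leI)
  qed
  also have "\<dots> = ennreal (2 * K / r) * ennreal (r - r/2) + ennreal (LBINT s=r..R. \<psi> s)"
    using r by (simp add: nn_integral_add nn_integral_cmult_indicator I)
  also have "ennreal (2 * K / r) * ennreal (r - r/2) = ennreal (2 * K / r * (r - r/2))"
    using r by (intro ennreal_mult''[symmetric]) simp
  also have "2 * K / r * (r - r/2) = K"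
    using r by (simp add: field_simps)
  also have "ennreal K + ennreal (LBINT s=r..R. \<psi> s) = ennreal (K + (LBINT s=r..R. \<psi> s))"
    using K I_nonneg by simp
  finally show ?thesis .
qed

lemma powr_mult_le_dyadic_average:
  fixes G :: "real \<Rightarrow> real"
  assumes t: "0 < t" and N: "0 \<le> N" and G_nonneg: "0 \<le> G t"
    and G_le: "\<And>s. t/2 \<le> s \<Longrightarrow> s \<le> t \<Longrightarrow> G t \<le> G s"
  shows "ennreal (t powr N * G t)
    \<le> ennreal (2 powr (N + 1) / t) * (\<integral>\<^sup>+s. ennreal (s powr N * G s) * indicator {t/2..t} s \<partial>lborel)"
proof -
  have "ennreal ((t/2) powr N * G t) * ennreal (t/2)
      = (\<integral>\<^sup>+s. ennreal ((t/2) powr N * G t) * indicator {t/2..t} s \<partial>lborel)"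
    using t by (simp add: nn_integral_cmult_indicator)
  also have "\<dots> \<le> (\<integral>\<^sup>+s. ennreal (s powr N * G s) * indicator {t/2..t} s \<partial>lborel)"
    using t N G_nonneg G_le
    by (intro nn_integral_mono) (auto simp: indicator_def intro!: ennreal_leI mult_mono powr_mono2)
  finally have average: "ennreal ((t/2) powr N * G t) * ennreal (t/2) \<le> \<dots>" .
  have "ennreal (t powr N * G t) = ennreal (2 powr (N + 1) / t * ((t/2) powr N * G t * (t/2)))"
    using t by (simp add: powr_add powr_divide field_simps)
  also have "\<dots> = ennreal (2 powr (N + 1) / t) * (ennreal ((t/2) powr N * G t) * ennreal (t/2))"
    using t G_nonneg by (simp add: ennreal_mult''[symmetric])
  also have "\<dots> \<le> ennreal (2 powr (N + 1) / t) * (\<integral>\<^sup>+s. ennreal (s powr N * G s) * indicator {t/2..t} s \<partial>lborel)"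
    by (intro mult_left_mono average) simp
  finally show ?thesis .
qed

lemma nn_integral_interval_measure_dyadic_le:
  fixes F :: "real \<Rightarrow> real" and \<psi> :: "real \<Rightarrow> ennreal"
  assumes F_mono: "mono F" and F_rc: "\<And>a. continuous (at_right a) F"
    and F_growth: "\<And>s. r/2 \<le> s \<Longrightarrow> F (2 * s) - F (s/2) \<le> A * s"
    and r: "0 < r" and c: "0 \<le> c" and [measurable]: "\<psi> \<in> borel_measurable borel"
  shows "(\<integral>\<^sup>+t. indicator {r<..R} t * ennreal (c / t) * (\<integral>\<^sup>+s. \<psi> s * indicator {t/2..t} s \<partial>lborel) \<partial>interval_measure F)
    \<le> ennreal (c * A) * (\<integral>\<^sup>+s. \<psi> s * indicator {r/2..R} s \<partial>lborel)"
proof -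
  define H where "H t s = indicator {r<..R} t * ennreal (c / t) * (\<psi> s * indicator {t/2..t} s)" for t s
  interpret pair_sigma_finite "interval_measure F" lborel
    by (intro pair_sigma_finite.intro sigma_finite_interval_measure[OF monoD[OF F_mono] F_rc]
        sigma_finite_lborel)
  have [measurable]: "case_prod H \<in> borel_measurable (interval_measure F \<Otimes>\<^sub>M lborel)"
    unfolding H_def indicator_def atLeastAtMost_iff by measurable
  have inner: "(\<integral>\<^sup>+t. H t s \<partial>interval_measure F) \<le> ennreal (c * A) * (\<psi> s * indicator {r/2..R} s)" for s
  proof (cases "r/2 \<le> s \<and> s \<le> R")
    case False
    then have "H t s = 0" for t
      unfolding H_def by (auto simp: indicator_def)
    then show ?thesis by simp
  next
    case True
    then have s: "0 < s" using r by simp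
    have "H t s \<le> ennreal (c / s) * \<psi> s * indicator {s/2<..2 * s} t" for t
    proof (cases "r < t \<and> t \<le> R \<and> t/2 \<le> s \<and> s \<le> t")
      case True
      then have "ennreal (c / t) \<le> ennreal (c / s)"
        using s c by (intro ennreal_leI divide_left_mono) auto
      then show ?thesis
        using True s unfolding H_def by (simp add: indicator_def mult_right_mono)
    qed (auto simp: H_def indicator_def)
    then have "(\<integral>\<^sup>+t. H t s \<partial>interval_measure F)
        \<le> ennreal (c / s) * \<psi> s * emeasure (interval_measure F) {s/2<..2 * s}"
      by (subst nn_integral_cmult_indicator[symmetric]) (auto intro!: nn_integral_mono)
    also have "emeasure (interval_measure F) {s/2<..2 * s} = ennreal (F (2 * s) - F (s/2))"
      using s by (intro emeasure_interval_measure_Ioc monoD[OF F_mono] F_rc) auto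
    also have "\<dots> \<le> ennreal (A * s)"
      using F_growth True by (intro ennreal_leI) auto
    also have "ennreal (c / s) * \<psi> s * ennreal (A * s) = ennreal (c * A) * (\<psi> s * indicator {r/2..R} s)"
      using True s c by (simp add: ennreal_mult''[symmetric] mult_ac)
    finally show ?thesis
      by (simp add: mult_left_mono)
  qed
  have "(\<integral>\<^sup>+t. indicator {r<..R} t * ennreal (c / t) * (\<integral>\<^sup>+s. \<psi> s * indicator {t/2..t} s \<partial>lborel) \<partial>interval_measure F)
      = (\<integral>\<^sup>+t. (\<integral>\<^sup>+s. H t s \<partial>lborel) \<partial>interval_measure F)"
    unfolding H_def by (simp add: nn_integral_cmult)
  also have "\<dots> = (\<integral>\<^sup>+s. (\<integral>\<^sup>+t. H t s \<partial>interval_measure F) \<partial>lborel)"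
    by (rule Fubini'[symmetric]) measurable
  also have "\<dots> \<le> (\<integral>\<^sup>+s. ennreal (c * A) * (\<psi> s * indicator {r/2..R} s) \<partial>lborel)"
    by (intro nn_integral_mono inner)
  also have "\<dots> = ennreal (c * A) * (\<integral>\<^sup>+s. \<psi> s * indicator {r/2..R} s \<partial>lborel)"
    by (simp add: nn_integral_cmult)
  finally show ?thesis .
qed

lemma interval_measure_integral_le_dyadic:
  fixes F G \<phi> :: "real \<Rightarrow> real"
  assumes F_mono: "mono F" and F_rc: "\<And>a. continuous (at_right a) F"
    and F_growth: "\<And>s. r/2 \<le> s \<Longrightarrow> F (2 * s) - F (s/2) \<le> A * s"
    and r: "0 < r" "r \<le> R" and N: "0 \<le> N"
    and G_anti: "antimono G" and G_nonneg: "\<And>s. 0 \<le> G s"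
    and G_le: "\<And>s. r/2 \<le> s \<Longrightarrow> s powr N * G s \<le> K / s"
    and \<phi>_cont: "continuous_on {r<..R} \<phi>"
    and \<phi>_nonneg: "\<And>t. t \<in> {r<..R} \<Longrightarrow> 0 \<le> \<phi> t"
    and \<phi>_le: "\<And>t. t \<in> {r<..R} \<Longrightarrow> \<phi> t \<le> t powr N * G t"
  shows "(\<integral>t. indicator {r<..R} t * \<phi> t \<partial>interval_measure F)
    \<le> 2 powr (N + 1) * A * (K + (LBINT s=r..R. s powr N * G s))"
proof -
  have [measurable]: "G \<in> borel_measurable borel"
    using G_anti by (rule borel_measurable_antimono)
  have "0 \<le> A * r"
    using F_growth[of r] monoD[OF F_mono, of "r/2" "2 * r"] r by simp
  then have A: "0 \<le> A"
    using r by (simp add: zero_le_mult_iff)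
  have K: "0 \<le> K"
  proof -
    have "0 \<le> r powr N * G r"
      using G_nonneg[of r] by simp
    also have "\<dots> \<le> K / r"
      using G_le[of r] r by simp
    finally show ?thesis
      using r by (simp add: zero_le_divide_iff)
  qed
  have I: "0 \<le> (LBINT s=r..R. s powr N * G s)"
    using r G_nonneg by (intro interval_integral_nonneg) auto
  have \<phi>_meas: "(\<lambda>t. indicator {r<..R} t * \<phi> t) \<in> borel_measurable (interval_measure F)"
    using borel_measurable_continuous_on_indicator[OF _ \<phi>_cont]
    by (simp add: measurable_cong_sets[OF sets_interval_measure refl])
  have "(\<integral>\<^sup>+t. ennreal (indicator {r<..R} t * \<phi> t) \<partial>interval_measure F)
      \<le> (\<integral>\<^sup>+t. indicator {r<..R} t * ennreal (2 powr (N + 1) / t)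
            * (\<integral>\<^sup>+s. ennreal (s powr N * G s) * indicator {t/2..t} s \<partial>lborel) \<partial>interval_measure F)"
  proof (rule nn_integral_mono)
    fix t
    show "ennreal (indicator {r<..R} t * \<phi> t)
      \<le> indicator {r<..R} t * ennreal (2 powr (N + 1) / t)
          * (\<integral>\<^sup>+s. ennreal (s powr N * G s) * indicator {t/2..t} s \<partial>lborel)"
    proof (cases "t \<in> {r<..R}")
      case True
      then have "ennreal (\<phi> t) \<le> ennreal (t powr N * G t)"
        using \<phi>_le by (intro ennreal_leI) auto
      also have "\<dots> \<le> ennreal (2 powr (N + 1) / t)
          * (\<integral>\<^sup>+s. ennreal (s powr N * G s) * indicator {t/2..t} s \<partial>lborel)"
        using True r N G_nonneg G_anti
        by (intro powr_mult_le_dyadic_average) (auto dest: antimonoD)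
      finally show ?thesis
        using True by simp
    qed simp
  qed
  also have "\<dots> \<le> ennreal (2 powr (N + 1) * A)
      * (\<integral>\<^sup>+s. ennreal (s powr N * G s) * indicator {r/2..R} s \<partial>lborel)"
    using F_mono F_rc F_growth r by (intro nn_integral_interval_measure_dyadic_le) auto
  also have "\<dots> \<le> ennreal (2 powr (N + 1) * A) * ennreal (K + (LBINT s=r..R. s powr N * G s))"
    using r G_nonneg G_le by (intro mult_left_mono nn_integral_Icc_half_le) auto
  also have "\<dots> = ennreal (2 powr (N + 1) * A * (K + (LBINT s=r..R. s powr N * G s)))"
    by (rule ennreal_mult''[symmetric]) (use K I in simp)
  finally show ?thesis
    using \<phi>_nonneg A K I
    by (subst integral_eq_nn_integral[OF \<phi>_meas]) (auto intro!: enn2real_leI AE_I2 simp: indicator_def)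
qed

theorem lemma4:
  fixes m Q :: "real \<Rightarrow> real" and b C :: real
  assumes b_pos: "b > 0"
    and m_mono: "mono_on {0..} m"
    and m_nonneg: "\<And>t. t \<ge> 0 \<Longrightarrow> m t \<ge> 0"
    and m_lin: "\<And>t. t \<ge> 0 \<Longrightarrow> m t \<le> C * t"
    and m_zero: "\<And>t. 0 \<le> t \<Longrightarrow> t < b \<Longrightarrow> m t = 0"
    and Q_cont: "continuous_on {0..} Q"
    and Q_nonneg: "\<And>t. t \<ge> 0 \<Longrightarrow> Q t \<ge> 0"
    and Q_O: "Q \<in> O[at_top](\<lambda>t. t)"
  shows "\<forall>N::real. N \<ge> 0 \<longrightarrow> (\<exists>C2\<ge>0. \<forall>r R. b \<le> r \<and> r < R \<longrightarrow>
           stieltjes_int m (\<lambda>t. Q t / t\<^sup>2) r R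
             \<le> C2 * (LBINT t=r..R. t powr N * (SUP s\<in>{t..}. Q s / s powr (2 + N))) + C2)"
proof (intro allI impI)
  fix N :: real assume N: "0 \<le> N"
  have b2: "0 < b/2"
    using b_pos by simp
  have "\<exists>K\<ge>0. \<forall>s\<ge>b/2. Q s \<le> K * s"
    using b2 Q_O by (intro continuous_bigo_id_imp_linear_bound continuous_on_subset[OF Q_cont]) auto
  then obtain K where K_nonneg: "0 \<le> K" and K: "\<And>s. b/2 \<le> s \<Longrightarrow> Q s \<le> K * s"
    by blast
  define G where "G t = (SUP s\<in>{max t (b/2)..}. Q s / s powr (2 + N))" for t
  have "\<And>s. b/2 \<le> s \<Longrightarrow> 0 \<le> Q s"
    using Q_nonneg b_pos by simp
  note G = tail_sup_powr_quotient[OF b2 N this K, folded G_def]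
  have C_nonneg: "0 \<le> C"
    using order_trans[OF m_nonneg m_lin, of b] b_pos by (simp add: zero_le_mult_iff)
  define D where "D = 2 powr (N + 1) * (4 * C)"
  have D_nonneg: "0 \<le> D"
    using C_nonneg by (simp add: D_def)
  show "\<exists>C2\<ge>0. \<forall>r R. b \<le> r \<and> r < R \<longrightarrow> stieltjes_int m (\<lambda>t. Q t / t\<^sup>2) r R
      \<le> C2 * (LBINT t=r..R. t powr N * (SUP s\<in>{t..}. Q s / s powr (2 + N))) + C2"
  proof (intro exI[of _ "D * (K + 1)"] conjI allI impI)
    show "0 \<le> D * (K + 1)"
      using D_nonneg K_nonneg by simp
    fix r R assume rR: "b \<le> r \<and> r < R"
    define I where "I = (LBINT t=r..R. t powr N * G t)"
    have "stieltjes_int m (\<lambda>t. Q t / t\<^sup>2) r R \<le> D * (K + I)"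
      unfolding stieltjes_int_def D_def I_def
      using b_pos rR N G Q_nonneg
      by (intro interval_measure_integral_le_dyadic continuous_on_subset[OF Q_cont] continuous_intros)
         (auto simp: mono_right_reg continuous_at_right_right_reg right_reg_dyadic_increment_le m_nonneg m_lin)
    also have "\<dots> \<le> D * (K + 1) * I + D * (K + 1)"
    proof -
      have "0 \<le> I"
        unfolding I_def using rR G(2) by (intro interval_integral_nonneg) auto
      then show ?thesis
        using D_nonneg K_nonneg by (simp add: algebra_simps)
    qed
    also have "I = (LBINT t=r..R. t powr N * (SUP s\<in>{t..}. Q s / s powr (2 + N)))"
      unfolding I_def G_def using rR b_pos by (intro interval_integral_cong) (simp add: max_absorb1)
    finally show "stieltjes_int m (\<lambda>t. Q t / t\<^sup>2) r R
      \<le> D * (K + 1) * (LBINT t=r..R. t powr N * (SUP s\<in>{t..}. Q s / s powr (2 + N))) + D * (K + 1)" .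
  qed
qed

end
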